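(* Let $N\ge3$, $N=2g+1$ or $2g+2$ with $g\ge1$. On the $(2g+1)$-dimensional space with coordinates $(\lambda_1,\dots,\lambda_g,z_1,\dots,z_g,v)$ (with $\lambda_j$ pairwise distinct and nonzero) consider the Poisson brackets $$\{\lambda_j,z_k\}=\delta_{jk}z_k,\quad \{\lambda_j,\lambda_k\}=\{z_j,z_k\}=\{\lambda_j,v\}=\{z_j,v\}=0.$$ Put $b_0=1,\tilde a_0=0$ if $N=2g+1$ and $b_0=v,\tilde a_0=1$ if $N=2g+2$, and define $$B(\lambda)=b_0\prod_{j=1}^g(\lambda-\lambda_j),\qquad \tilde A(\lambda)=\Bigl(\frac{\tilde a_0}{b_0}+\sum_{j=1}^g\frac{z_j}{B'(\lambda_j)(\lambda-\lambda_j)\lambda_j}\Bigr)B(\lambda).$$ Then, for independent parameters $\lambda,\mu$, $$\{\tilde A(\lambda),\tilde A(\mu)\}=\{B(\lambda),B(\mu)\}=0,\qquad \{\tilde A(\lambda),B(\mu)\}=\frac{B(\lambda)\tilde A(\mu)-\tilde A(\lambda)B(\mu)}{\lambda-\mu}.$$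
   Context: $B'(\lambda_j)=b_0\prod_{k\ne j}(\lambda_j-\lambda_k)$. $\tilde A$ is the unique polynomial of degree $\le g$ with leading coefficient $\tilde a_0$ at $\lambda^g$ and $\tilde A(\lambda_j)\lambda_j=z_j$. Brackets of polynomials in $\lambda$ are taken coefficientwise. *)

theory Defs
  imports "HOL-Analysis.Analysis"
begin

text \<open>A phase-space point is (l, z, v): l j = lambda_j, z j = z_j for j in {1..g}.
  Observables are functions F l z v.\<close>

type_synonym obs = "(nat \<Rightarrow> real) \<Rightarrow> (nat \<Rightarrow> real) \<Rightarrow> real \<Rightarrow> real"

definition dlam :: "obs \<Rightarrow> nat \<Rightarrow> obs" where
  "dlam F j l z v = deriv (\<lambda>t. F (l(j := t)) z v) (l j)"

definition dz :: "obs \<Rightarrow> nat \<Rightarrow> obs" where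
  "dz F j l z v = deriv (\<lambda>t. F l (z(j := t)) v) (z j)"

text \<open>Poisson bracket determined by {lambda_j, z_k} = delta_jk z_k, all other
  coordinate brackets zero, extended by the Leibniz rule:
  {F,G} = sum_j z_j (dF/dlambda_j dG/dz_j - dF/dz_j dG/dlambda_j).\<close>
definition pbr :: "nat \<Rightarrow> obs \<Rightarrow> obs \<Rightarrow> obs" where
  "pbr g F G l z v = (\<Sum>j=1..g. z j * (dlam F j l z v * dz G j l z v - dz F j l z v * dlam G j l z v))"

definition b0 :: "nat \<Rightarrow> nat \<Rightarrow> real \<Rightarrow> real" where
  "b0 N g v = (if N = 2*g+1 then 1 else v)"

definition a0t :: "nat \<Rightarrow> nat \<Rightarrow> real" where
  "a0t N g = (if N = 2*g+1 then 0 else 1)"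

definition Bpoly :: "nat \<Rightarrow> nat \<Rightarrow> real \<Rightarrow> obs" where
  "Bpoly N g x l z v = b0 N g v * (\<Prod>j=1..g. (x - l j))"

text \<open>B'(lambda_j) = b0 prod_{k \<noteq> j} (lambda_j - lambda_k)\<close>
definition Bder :: "nat \<Rightarrow> nat \<Rightarrow> nat \<Rightarrow> obs" where
  "Bder N g j l z v = b0 N g v * (\<Prod>k\<in>{1..g}-{j}. (l j - l k))"

text \<open>B(x)/(x - lambda_j), written as the polynomial b0 prod_{k \<noteq> j} (x - lambda_k)\<close>
definition Bquot :: "nat \<Rightarrow> nat \<Rightarrow> nat \<Rightarrow> real \<Rightarrow> obs" where
  "Bquot N g j x l z v = b0 N g v * (\<Prod>k\<in>{1..g}-{j}. (x - l k))"

definition Atil :: "nat \<Rightarrow> nat \<Rightarrow> real \<Rightarrow> obs" where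
  "Atil N g x l z v = a0t N g / b0 N g v * Bpoly N g x l z v
     + (\<Sum>j=1..g. z j / (Bder N g j l z v * l j) * Bquot N g j x l z v)"

end

theory Submission
  imports Defs
begin

text \<open>
  Write \<open>Q\<^sub>j(x) = B(x)/(x - \<lambda>\<^sub>j)\<close>. As \<open>B\<close> does not depend on \<open>z\<close>, \<open>{B(\<lambda>), B(\<mu>)} = 0\<close>;
  moreover \<open>\<partial>B(x)/\<partial>\<lambda>\<^sub>j = -Q\<^sub>j(x)\<close> and \<open>\<partial>\<tilde>A(x)/\<partial>z\<^sub>j = Q\<^sub>j(x)/(B'(\<lambda>\<^sub>j)\<lambda>\<^sub>j)\<close>.
  The key observation is that \<open>\<partial>\<tilde>A(x)/\<partial>\<lambda>\<^sub>j = c\<^sub>j Q\<^sub>j(x)\<close> with \<open>c\<^sub>j\<close> independent of \<open>x\<close>: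
  by a partial fraction expansion, \<open>\<tilde>A(x)\<close> as a function of \<open>\<lambda>\<^sub>j\<close> is a term not depending
  on \<open>\<lambda>\<^sub>j\<close> plus \<open>Q\<^sub>j(x)\<close> times a rational function of \<open>\<lambda>\<^sub>j\<close>. Hence the two terms of each
  summand of \<open>{\<tilde>A(\<lambda>), \<tilde>A(\<mu>)}\<close> cancel, and
  \<open>{\<tilde>A(\<lambda>), B(\<mu>)} = \<Sum>\<^sub>j z\<^sub>j Q\<^sub>j(\<lambda>) Q\<^sub>j(\<mu>)/(B'(\<lambda>\<^sub>j)\<lambda>\<^sub>j)\<close>, which is the claimed
  value because \<open>B(\<lambda>)Q\<^sub>j(\<mu>) - Q\<^sub>j(\<lambda>)B(\<mu>) = (\<lambda> - \<mu>)Q\<^sub>j(\<lambda>)Q\<^sub>j(\<mu>)\<close>.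
\<close>

definition node_poly :: "nat set \<Rightarrow> (nat \<Rightarrow> real) \<Rightarrow> real \<Rightarrow> real" where
  "node_poly S l x = (\<Prod>m\<in>S. x - l m)"

lemma node_poly_remove:
  "finite S \<Longrightarrow> k \<in> S \<Longrightarrow> node_poly S l x = (x - l k) * node_poly (S - {k}) l x"
  unfolding node_poly_def by (simp add: prod.remove)

lemma node_poly_fun_upd [simp]: "j \<notin> S \<Longrightarrow> node_poly S (l(j := t)) x = node_poly S l x"
  unfolding node_poly_def by (auto intro!: prod.cong)

lemma node_poly_nonzero: "x \<notin> l ` S \<Longrightarrow> node_poly S l x \<noteq> 0"
  unfolding node_poly_def by (cases "finite S") auto

lemma node_poly_differentiable: "finite S \<Longrightarrow> node_poly S l differentiable at x"
  unfolding node_poly_def differentiable_def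
  by (rule exI, rule has_derivative_prod) (auto intro!: derivative_intros)

lemma Bpoly_node_poly: "Bpoly N g x l z v = b0 N g v * node_poly {1..g} l x"
  unfolding Bpoly_def node_poly_def ..

lemma Bquot_node_poly: "Bquot N g j x l z v = b0 N g v * node_poly ({1..g} - {j}) l x"
  unfolding Bquot_def node_poly_def ..

lemma Bder_node_poly: "Bder N g j l z v = b0 N g v * node_poly ({1..g} - {j}) l (l j)"
  unfolding Bder_def node_poly_def ..

lemma Bpoly_eq_Bquot: "j \<in> {1..g} \<Longrightarrow> Bpoly N g x l z v = (x - l j) * Bquot N g j x l z v"
  by (simp add: Bpoly_node_poly Bquot_node_poly node_poly_remove[of _ j])

lemma Bquot_fun_upd_lam [simp]: "Bquot N g j x (l(j := t)) z v = Bquot N g j x l z v"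
  by (simp add: Bquot_node_poly)

lemma dz_Bpoly: "dz (Bpoly N g x) j l z v = 0"
  unfolding dz_def Bpoly_def by simp

lemma dlam_Bpoly:
  assumes "j \<in> {1..g}"
  shows "dlam (Bpoly N g x) j l z v = - Bquot N g j x l z v"
proof -
  have "(\<lambda>t. Bpoly N g x (l(j := t)) z v) = (\<lambda>t. (x - t) * Bquot N g j x l z v)"
    using Bpoly_eq_Bquot[OF assms] by simp
  moreover have "((\<lambda>t. (x - t) * Bquot N g j x l z v) has_real_derivative - Bquot N g j x l z v) (at (l j))"
    by (auto intro!: derivative_eq_intros)
  ultimately show ?thesis
    unfolding dlam_def by (simp add: DERIV_imp_deriv)
qed

lemma Atil_fun_upd_z:
  assumes "j \<in> {1..g}"
  shows "Atil N g x l (z(j := s)) v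
    = Atil N g x l (z(j := 0)) v + s * (Bquot N g j x l z v / (Bder N g j l z v * l j))"
  unfolding Atil_def using assms
  by (subst (1 2) sum.remove[of "{1..g}" j])
    (simp_all add: Bpoly_node_poly Bquot_node_poly Bder_node_poly)

lemma dz_Atil:
  assumes "j \<in> {1..g}"
  shows "dz (Atil N g x) j l z v = Bquot N g j x l z v / (Bder N g j l z v * l j)"
proof -
  have "((\<lambda>s. K + s * c) has_real_derivative c) (at (z j))" for K c :: real
    by (auto intro!: derivative_eq_intros)
  then show ?thesis
    unfolding dz_def by (subst Atil_fun_upd_z[OF assms]) (rule DERIV_imp_deriv)
qed

text \<open>The rational function of \<open>\<lambda>\<^sub>j = t\<close> multiplying \<open>Q\<^sub>j(x)\<close> in \<open>\<tilde>A(x)\<close>.\<close>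

definition Atil_lam_coeff ::
    "nat \<Rightarrow> nat \<Rightarrow> nat \<Rightarrow> (nat \<Rightarrow> real) \<Rightarrow> (nat \<Rightarrow> real) \<Rightarrow> real \<Rightarrow> real \<Rightarrow> real" where
  "Atil_lam_coeff N g j l z v t =
     - a0t N g / b0 N g v * t + z j / (b0 N g v * node_poly ({1..g} - {j}) l t * t)
     + (\<Sum>k\<in>{1..g} - {j}. z k / (node_poly ({1..g} - {j, k}) l (l k) * l k) / (b0 N g v * (l k - t)))"

lemma Atil_summand_fun_upd_lam:
  fixes z :: "nat \<Rightarrow> real"
  assumes "j \<in> {1..g}" "k \<in> {1..g} - {j}" "t \<noteq> l k" "b0 N g v \<noteq> 0"
  defines "c \<equiv> z k / (node_poly ({1..g} - {j, k}) l (l k) * l k)"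
  shows "z k / (Bder N g k (l(j := t)) z v * l k) * Bquot N g k x (l(j := t)) z v
    = c * node_poly ({1..g} - {j, k}) l x + Bquot N g j x l z v * (c / (b0 N g v * (l k - t)))"
proof -
  let ?R = "node_poly ({1..g} - {j, k}) l"
  have "{1..g} - {k} - {j} = {1..g} - {j, k}" "{1..g} - {j} - {k} = {1..g} - {j, k}"
    by auto
  then have remove_j: "node_poly ({1..g} - {k}) (l(j := t)) y = (y - t) * ?R y"
    and remove_k: "node_poly ({1..g} - {j}) l y = (y - l k) * ?R y" for y
    using node_poly_remove[of "{1..g} - {k}" j "l(j := t)" y] node_poly_remove[of "{1..g} - {j}" k l y]
      assms(1,2)
    by auto
  have Bder_k: "Bder N g k (l(j := t)) z v = b0 N g v * (l k - t) * ?R (l k)"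
    using assms(2) remove_j[of "l k"] by (simp add: Bder_node_poly)
  have Bquot_k: "Bquot N g k x (l(j := t)) z v = b0 N g v * (x - t) * ?R x"
    using remove_j[of x] by (simp add: Bquot_node_poly)
  have Bquot_j: "Bquot N g j x l z v = b0 N g v * (x - l k) * ?R x"
    using remove_k[of x] by (simp add: Bquot_node_poly)
  \<comment> \<open>\<open>(x - t)/(\<lambda>\<^sub>k - t) = 1 + (x - \<lambda>\<^sub>k)/(\<lambda>\<^sub>k - t)\<close>\<close>
  show ?thesis
  proof (cases "?R (l k) * l k = 0")
    case True
    then show ?thesis
      by (auto simp: c_def Bder_k)
  next
    case False
    then show ?thesis
      using assms(3,4) by (auto simp: c_def Bder_k Bquot_k Bquot_j field_simps)
  qed
qed

lemma Atil_fun_upd_lam: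
  assumes "j \<in> {1..g}" "t \<notin> l ` ({1..g} - {j})" "b0 N g v \<noteq> 0"
  shows "Atil N g x (l(j := t)) z v
    = (a0t N g / b0 N g v * x * Bquot N g j x l z v
       + (\<Sum>k\<in>{1..g} - {j}. z k / (node_poly ({1..g} - {j, k}) l (l k) * l k)
                              * node_poly ({1..g} - {j, k}) l x))
      + Bquot N g j x l z v * Atil_lam_coeff N g j l z v t"
proof -
  let ?Q = "Bquot N g j x l z v"
  let ?c = "\<lambda>k. z k / (node_poly ({1..g} - {j, k}) l (l k) * l k)"
  have Bpoly_j: "Bpoly N g x (l(j := t)) z v = (x - t) * ?Q"
    using Bpoly_eq_Bquot[OF assms(1), of N x "l(j := t)"] by simp
  have Bder_j: "Bder N g j (l(j := t)) z v = b0 N g v * node_poly ({1..g} - {j}) l t"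
    by (simp add: Bder_node_poly)
  have summands: "(\<Sum>k\<in>{1..g} - {j}. z k / (Bder N g k (l(j := t)) z v * (l(j := t)) k)
                      * Bquot N g k x (l(j := t)) z v)
      = (\<Sum>k\<in>{1..g} - {j}. ?c k * node_poly ({1..g} - {j, k}) l x
                              + ?Q * (?c k / (b0 N g v * (l k - t))))"
  proof (rule sum.cong[OF refl])
    fix k assume k: "k \<in> {1..g} - {j}"
    with assms(2) have "t \<noteq> l k" by auto
    with k show "z k / (Bder N g k (l(j := t)) z v * (l(j := t)) k) * Bquot N g k x (l(j := t)) z v
      = ?c k * node_poly ({1..g} - {j, k}) l x + ?Q * (?c k / (b0 N g v * (l k - t)))"
      using Atil_summand_fun_upd_lam[OF assms(1) k _ assms(3)] by simp
  qed
  show ?thesis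
    unfolding Atil_def sum.remove[OF finite_atLeastAtMost assms(1)] summands Atil_lam_coeff_def
    using assms(3) by (simp add: Bpoly_j Bder_j sum.distrib sum_distrib_left algebra_simps)
qed

lemma Atil_lam_coeff_differentiable:
  assumes "l j \<notin> l ` ({1..g} - {j})" "l j \<noteq> 0" "b0 N g v \<noteq> 0"
  shows "Atil_lam_coeff N g j l z v differentiable at (l j)"
proof -
  have "node_poly ({1..g} - {j}) l (l j) \<noteq> 0"
    using assms(1) by (rule node_poly_nonzero)
  then have pole: "(\<lambda>t. z j / (b0 N g v * node_poly ({1..g} - {j}) l t * t)) differentiable at (l j)"
    using assms(2,3) by (auto intro!: derivative_intros node_poly_differentiable)
  have summand: "(\<lambda>t. c / (b0 N g v * (l k - t))) differentiable at (l j)"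
    if "k \<in> {1..g} - {j}" for c k
  proof -
    have "l k \<noteq> l j"
      using assms(1) that by (metis image_eqI)
    then show ?thesis
      using assms(3) by (auto intro!: derivative_intros)
  qed
  show ?thesis
    unfolding Atil_lam_coeff_def
    using assms(3)
    by (intro differentiable_add differentiable_sum ballI pole summand)
    (auto intro!: derivative_intros)
qed

lemma dlam_Atil:
  assumes "j \<in> {1..g}" "l j \<notin> l ` ({1..g} - {j})" "l j \<noteq> 0" "b0 N g v \<noteq> 0"
  shows "dlam (Atil N g x) j l z v = deriv (Atil_lam_coeff N g j l z v) (l j) * Bquot N g j x l z v"
proof -
  obtain E where E: "\<And>t. t \<notin> l ` ({1..g} - {j}) \<Longrightarrow>
      Atil N g x (l(j := t)) z v = E + Bquot N g j x l z v * Atil_lam_coeff N g j l z v t"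
    using Atil_fun_upd_lam[OF assms(1) _ assms(4)] by blast
  have "\<forall>\<^sub>F t in nhds (l j). t \<notin> l ` ({1..g} - {j})"
    using eventually_nhds_in_open[of "- l ` ({1..g} - {j})" "l j"] assms(2)
    by (simp add: open_Compl finite_imp_closed)
  then have "\<forall>\<^sub>F t in nhds (l j).
      Atil N g x (l(j := t)) z v = E + Bquot N g j x l z v * Atil_lam_coeff N g j l z v t"
    by eventually_elim (rule E)
  then have "deriv (\<lambda>t. Atil N g x (l(j := t)) z v) (l j)
      = deriv (\<lambda>t. E + Bquot N g j x l z v * Atil_lam_coeff N g j l z v t) (l j)"
    by (rule deriv_cong_ev) simp
  also have "\<dots> = Bquot N g j x l z v * deriv (Atil_lam_coeff N g j l z v) (l j)"
    using Atil_lam_coeff_differentiable[OF assms(2-4)]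
    by (intro DERIV_imp_deriv)
      (auto intro!: derivative_eq_intros simp: DERIV_deriv_iff_real_differentiable[symmetric])
  finally show ?thesis
    unfolding dlam_def by simp
qed

lemma pbr_Atil_Atil:
  assumes "\<forall>j\<in>{1..g}. l j \<notin> l ` ({1..g} - {j}) \<and> l j \<noteq> 0" "b0 N g v \<noteq> 0"
  shows "pbr g (Atil N g x) (Atil N g y) l z v = 0"
  unfolding pbr_def using assms by (intro sum.neutral) (simp add: dlam_Atil dz_Atil)

lemma pbr_Bpoly_Bpoly: "pbr g (Bpoly N g x) (Bpoly N g y) l z v = 0"
  unfolding pbr_def by (simp add: dz_Bpoly)

lemma pbr_Atil_Bpoly:
  "pbr g (Atil N g x) (Bpoly N g y) l z v
     = (\<Sum>j=1..g. z j / (Bder N g j l z v * l j) * (Bquot N g j x l z v * Bquot N g j y l z v))"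
  unfolding pbr_def by (intro sum.cong refl) (simp add: dz_Bpoly dlam_Bpoly dz_Atil)

lemma Bpoly_Atil_cross:
  "Bpoly N g x l z v * Atil N g y l z v - Atil N g x l z v * Bpoly N g y l z v
     = (x - y) * (\<Sum>j=1..g. z j / (Bder N g j l z v * l j) * (Bquot N g j x l z v * Bquot N g j y l z v))"
proof -
  have cross: "Bpoly N g x l z v * Bquot N g j y l z v - Bquot N g j x l z v * Bpoly N g y l z v
      = (x - y) * (Bquot N g j x l z v * Bquot N g j y l z v)" if "j \<in> {1..g}" for j
    using that by (simp add: Bpoly_eq_Bquot[of j] algebra_simps)
  have "Bpoly N g x l z v * Atil N g y l z v - Atil N g x l z v * Bpoly N g y l z v
      = (\<Sum>j=1..g. z j / (Bder N g j l z v * l j)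
           * (Bpoly N g x l z v * Bquot N g j y l z v - Bquot N g j x l z v * Bpoly N g y l z v))"
    unfolding Atil_def by (simp add: algebra_simps sum_distrib_left sum_distrib_right sum_subtractf)
  also have "\<dots> = (\<Sum>j=1..g. (x - y) * (z j / (Bder N g j l z v * l j)
                                       * (Bquot N g j x l z v * Bquot N g j y l z v)))"
    by (rule sum.cong[OF refl]) (simp add: cross mult.left_commute)
  finally show ?thesis
    by (simp add: sum_distrib_left)
qed

theorem mainTheorem7:
  fixes N g :: nat and l z :: "nat \<Rightarrow> real" and v lam mu :: real
  assumes "N \<ge> 3" and "g \<ge> 1" and "N = 2*g+1 \<or> N = 2*g+2"
    and "\<forall>j\<in>{1..g}. \<forall>k\<in>{1..g}. j \<noteq> k \<longrightarrow> l j \<noteq> l k"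
    and "\<forall>j\<in>{1..g}. l j \<noteq> 0"
    and "N = 2*g+2 \<longrightarrow> v \<noteq> 0"
  shows "pbr g (Atil N g lam) (Atil N g mu) l z v = 0
       \<and> pbr g (Bpoly N g lam) (Bpoly N g mu) l z v = 0
       \<and> (lam \<noteq> mu \<longrightarrow> pbr g (Atil N g lam) (Bpoly N g mu) l z v
            = (Bpoly N g lam l z v * Atil N g mu l z v - Atil N g lam l z v * Bpoly N g mu l z v) / (lam - mu))"
proof -
  have "b0 N g v \<noteq> 0"
    using assms(3,6) by (auto simp: b0_def)
  moreover have "\<forall>j\<in>{1..g}. l j \<notin> l ` ({1..g} - {j}) \<and> l j \<noteq> 0"
    using assms(4,5) by fastforce
  ultimately show ?thesis
    by (simp add: pbr_Atil_Atil pbr_Bpoly_Bpoly pbr_Atil_Bpoly Bpoly_Atil_cross)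
qed

end
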